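(* Let $T\in\mathcal{KC}(V)$ be such that $T$ and $\overline{T}$ are of type $\omega\in(0,\pi)$. Then for every $\theta\in(\omega,\pi)$ there exists $C_\theta\geq0$ such that $\|Q_{c,s}^{-1}(T)\|\leq C_\theta/|s|^2$ for every $s\in S_\theta^c\setminus\{0\}$.
   Context: $\mathbb{H}$ denotes the quaternions $s=s_0+s_1e_1+s_2e_2+s_3e_3$ with $e_1^2=e_2^2=e_3^2=-1$, $e_1e_2=-e_2e_1=e_3$, $e_2e_3=-e_3e_2=e_1$, $e_3e_1=-e_1e_3=e_2$; $|s|$ is the Euclidean norm, $\overline{e_i}=-e_i$ for $i=1,2,3$, $\mathbb{S}=\{s:s_0=0,|s|=1\}$. For $\omega\in(0,\pi)$, $S_\omega=\{re^{J\phi}: r>0, J\in\mathbb{S}, |\phi|<\omega\}$, $\overline{S_\omega}$ its closure, $S_\omega^c=\mathbb{H}\setminus S_\omega$. $V$ is a two-sided Banach space over $\mathbb{H}$, $\mathcal{I}$ the identity. $\mathcal{KC}(V)$ is the class of closed right-linear operators $T$ with two-sided linear domain such that $T=T_0+e_1T_1+e_2T_2+e_3T_3$ with two-sided linear $T_i$, $\operatorname{dom}(T_i)=\operatorname{dom}(T)$, $\operatorname{dom}(T^2)\subseteq\operatorname{dom}(T_iT_j)$ and $T_iT_j=T_jT_i$ on $\operatorname{dom}(T^2)$. $\overline{T}:=T_0-e_1T_1-e_2T_2-e_3T_3$, $|T|^2:=T_0^2+T_1^2+T_2^2+T_3^2$, $Q_{c,s}(T):=s^2\mathcal{I}-2sT_0+|T|^2$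 with domain $\operatorname{dom}(T^2)$. $\rho_S(T)$ is the set of $s\in\mathbb{H}$ for which $Q_{c,s}(T):\operatorname{dom}(T^2)\to V$ is bijective, $Q_{c,s}^{-1}(T)$ the inverse, $\sigma_S(T)=\mathbb{H}\setminus\rho_S(T)$. $S_L^{-1}(s,T):=(s\mathcal{I}-\overline{T})Q_{c,s}^{-1}(T)$ and $S_R^{-1}(s,T):=sQ_{c,s}^{-1}(T)-\sum_{i=0}^3T_iQ_{c,s}^{-1}(T)\overline{e_i}$ ($e_0=1$). $T\in\mathcal{KC}(V)$ is of type $\omega$ if $\sigma_S(T)\subseteq\overline{S_\omega}$ and for every $\theta\in(\omega,\pi)$ there is $C_\theta\geq0$ with $\|S_L^{-1}(s,T)\|\leq C_\theta/|s|$ and $\|S_R^{-1}(s,T)\|\leq C_\theta/|s|$ for all $s\in S_\theta^c\setminus\{0\}$. *)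

theory Defs
  imports "HOL-Analysis.Analysis"
begin

section \<open>Quaternions, modelled as real^4 (components 0,1,2,3 = s0,s1,s2,s3)\<close>

type_synonym quat = "real^4"

text \<open>Addition, zero, negation, the Euclidean norm |s| and the topology are those of real^4.
  Quaternion multiplication is defined explicitly.\<close>

definition mkq :: "real \<Rightarrow> real \<Rightarrow> real \<Rightarrow> real \<Rightarrow> quat" where
  "mkq a0 a1 a2 a3 = (\<chi> i. if i = 0 then a0 else if i = 1 then a1 else if i = 2 then a2 else a3)"

definition qmult :: "quat \<Rightarrow> quat \<Rightarrow> quat" where
  "qmult a b = mkq
     (a$0*b$0 - a$1*b$1 - a$2*b$2 - a$3*b$3)
     (a$0*b$1 + a$1*b$0 + a$2*b$3 - a$3*b$2)
     (a$0*b$2 - a$1*b$3 + a$2*b$0 + a$3*b$1)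
     (a$0*b$3 + a$1*b$2 - a$2*b$1 + a$3*b$0)"

definition qreal :: "real \<Rightarrow> quat" where
  "qreal r = mkq r 0 0 0"

definition qcnj :: "quat \<Rightarrow> quat" where
  "qcnj a = mkq (a$0) (- a$1) (- a$2) (- a$3)"

definition qe :: "nat \<Rightarrow> quat" where
  "qe i = (if i = 0 then mkq 1 0 0 0 else if i = 1 then mkq 0 1 0 0
           else if i = 2 then mkq 0 0 1 0 else mkq 0 0 0 1)"

definition imag_sphere :: "quat set" where
  "imag_sphere = {s. s$0 = 0 \<and> norm s = 1}"

definition sector :: "real \<Rightarrow> quat set" where
  "sector \<omega> = {qmult (qreal r) (qreal (cos \<phi>) + qmult J (qreal (sin \<phi>))) | r \<phi> J.
                  r > 0 \<and> J \<in> imag_sphere \<and> \<bar>\<phi>\<bar> < \<omega>}"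

text \<open>V is a real Banach space ('v :: banach) with a left action lm and a right action rm of
  the quaternions, compatible with the real structure and the norm.\<close>
definition two_sided_qbanach :: "(quat \<Rightarrow> 'v::banach \<Rightarrow> 'v) \<Rightarrow> ('v \<Rightarrow> quat \<Rightarrow> 'v) \<Rightarrow> bool" where
  "two_sided_qbanach lm rm \<longleftrightarrow>
     (\<forall>a b v. lm (a + b) v = lm a v + lm b v) \<and>
     (\<forall>a v w. lm a (v + w) = lm a v + lm a w) \<and>
     (\<forall>a b v. lm (qmult a b) v = lm a (lm b v)) \<and>
     (\<forall>r v. lm (qreal r) v = r *\<^sub>R v) \<and>
     (\<forall>a b v. rm v (a + b) = rm v a + rm v b) \<and>
     (\<forall>a v w. rm (v + w) a = rm v a + rm w a) \<and>
     (\<forall>a b v. rm v (qmult a b) = rm (rm v a) b) \<and>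
     (\<forall>r v. rm v (qreal r) = r *\<^sub>R v) \<and>
     (\<forall>a b v. lm a (rm v b) = rm (lm a v) b) \<and>
     (\<forall>a v. norm (lm a v) \<le> norm a * norm v) \<and>
     (\<forall>a v. norm (rm v a) \<le> norm a * norm v)"

definition two_sided_subspace :: "(quat \<Rightarrow> 'v::banach \<Rightarrow> 'v) \<Rightarrow> ('v \<Rightarrow> quat \<Rightarrow> 'v) \<Rightarrow> 'v set \<Rightarrow> bool" where
  "two_sided_subspace lm rm D \<longleftrightarrow> 0 \<in> D \<and> (\<forall>v\<in>D. \<forall>w\<in>D. v + w \<in> D) \<and>
     (\<forall>a. \<forall>v\<in>D. lm a v \<in> D \<and> rm v a \<in> D)"

definition two_sided_linear_on :: "(quat \<Rightarrow> 'v::banach \<Rightarrow> 'v) \<Rightarrow> ('v \<Rightarrow> quat \<Rightarrow> 'v) \<Rightarrow> 'v set \<Rightarrow> ('v \<Rightarrow> 'v) \<Rightarrow> bool" where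
  "two_sided_linear_on lm rm D A \<longleftrightarrow>
     (\<forall>v\<in>D. \<forall>w\<in>D. A (v + w) = A v + A w) \<and>
     (\<forall>a. \<forall>v\<in>D. A (lm a v) = lm a (A v) \<and> A (rm v a) = rm (A v) a)"

definition right_linear_on :: "('v \<Rightarrow> quat \<Rightarrow> 'v) \<Rightarrow> 'v set \<Rightarrow> ('v::banach \<Rightarrow> 'v) \<Rightarrow> bool" where
  "right_linear_on rm D A \<longleftrightarrow>
     (\<forall>v\<in>D. \<forall>w\<in>D. A (v + w) = A v + A w) \<and> (\<forall>a. \<forall>v\<in>D. A (rm v a) = rm (A v) a)"

text \<open>An operator is given by its domain D and its components Ts 0, ..., Ts 3 (values outside
  D are irrelevant).\<close>
definition op_of :: "(quat \<Rightarrow> 'v::banach \<Rightarrow> 'v) \<Rightarrow> (nat \<Rightarrow> 'v \<Rightarrow> 'v) \<Rightarrow> 'v \<Rightarrow> 'v" where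
  "op_of lm Ts v = (\<Sum>i<4. lm (qe i) (Ts i v))"

definition conj_comps :: "(nat \<Rightarrow> 'v::banach \<Rightarrow> 'v) \<Rightarrow> nat \<Rightarrow> 'v \<Rightarrow> 'v" where
  "conj_comps Ts i = (if i = 0 then Ts 0 else (\<lambda>v. - Ts i v))"

definition dom_sq :: "(quat \<Rightarrow> 'v::banach \<Rightarrow> 'v) \<Rightarrow> 'v set \<Rightarrow> (nat \<Rightarrow> 'v \<Rightarrow> 'v) \<Rightarrow> 'v set" where
  "dom_sq lm D Ts = {v \<in> D. op_of lm Ts v \<in> D}"

definition in_KC :: "(quat \<Rightarrow> 'v::banach \<Rightarrow> 'v) \<Rightarrow> ('v \<Rightarrow> quat \<Rightarrow> 'v) \<Rightarrow> 'v set \<Rightarrow> (nat \<Rightarrow> 'v \<Rightarrow> 'v) \<Rightarrow> bool" where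
  "in_KC lm rm D Ts \<longleftrightarrow>
     two_sided_subspace lm rm D \<and>
     right_linear_on rm D (op_of lm Ts) \<and>
     closed {(v, op_of lm Ts v) | v. v \<in> D} \<and>
     (\<forall>i<4. two_sided_linear_on lm rm D (Ts i)) \<and>
     (\<forall>j<4. dom_sq lm D Ts \<subseteq> {v \<in> D. Ts j v \<in> D}) \<and>
     (\<forall>i<4. \<forall>j<4. \<forall>v \<in> dom_sq lm D Ts. Ts i (Ts j v) = Ts j (Ts i v))"

definition Qcs :: "(quat \<Rightarrow> 'v::banach \<Rightarrow> 'v) \<Rightarrow> (nat \<Rightarrow> 'v \<Rightarrow> 'v) \<Rightarrow> quat \<Rightarrow> 'v \<Rightarrow> 'v" where
  "Qcs lm Ts s v = lm (qmult s s) v - lm (qmult (qreal 2) s) (Ts 0 v) + (\<Sum>i<4. Ts i (Ts i v))"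

definition S_resolvent_set :: "(quat \<Rightarrow> 'v::banach \<Rightarrow> 'v) \<Rightarrow> 'v set \<Rightarrow> (nat \<Rightarrow> 'v \<Rightarrow> 'v) \<Rightarrow> quat set" where
  "S_resolvent_set lm D Ts = {s. bij_betw (Qcs lm Ts s) (dom_sq lm D Ts) UNIV}"

definition S_spectrum :: "(quat \<Rightarrow> 'v::banach \<Rightarrow> 'v) \<Rightarrow> 'v set \<Rightarrow> (nat \<Rightarrow> 'v \<Rightarrow> 'v) \<Rightarrow> quat set" where
  "S_spectrum lm D Ts = UNIV - S_resolvent_set lm D Ts"

definition Qcs_inv :: "(quat \<Rightarrow> 'v::banach \<Rightarrow> 'v) \<Rightarrow> 'v set \<Rightarrow> (nat \<Rightarrow> 'v \<Rightarrow> 'v) \<Rightarrow> quat \<Rightarrow> 'v \<Rightarrow> 'v" where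
  "Qcs_inv lm D Ts s = the_inv_into (dom_sq lm D Ts) (Qcs lm Ts s)"

definition SL_inv :: "(quat \<Rightarrow> 'v::banach \<Rightarrow> 'v) \<Rightarrow> 'v set \<Rightarrow> (nat \<Rightarrow> 'v \<Rightarrow> 'v) \<Rightarrow> quat \<Rightarrow> 'v \<Rightarrow> 'v" where
  "SL_inv lm D Ts s v = lm s (Qcs_inv lm D Ts s v) - op_of lm (conj_comps Ts) (Qcs_inv lm D Ts s v)"

text \<open>S_R^{-1}(s,T) = s Q^{-1} - sum_i T_i Q^{-1} conj(e_i), where an operator followed by a
  scalar a denotes (A a)(v) = A(a v).\<close>
definition SR_inv :: "(quat \<Rightarrow> 'v::banach \<Rightarrow> 'v) \<Rightarrow> 'v set \<Rightarrow> (nat \<Rightarrow> 'v \<Rightarrow> 'v) \<Rightarrow> quat \<Rightarrow> 'v \<Rightarrow> 'v" where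
  "SR_inv lm D Ts s v = lm s (Qcs_inv lm D Ts s v)
      - (\<Sum>i<4. Ts i (Qcs_inv lm D Ts s (lm (qcnj (qe i)) v)))"

definition op_norm_le :: "('v::banach \<Rightarrow> 'v) \<Rightarrow> real \<Rightarrow> bool" where
  "op_norm_le A c \<longleftrightarrow> (\<forall>v. norm (A v) \<le> c * norm v)"

definition of_type :: "(quat \<Rightarrow> 'v::banach \<Rightarrow> 'v) \<Rightarrow> ('v \<Rightarrow> quat \<Rightarrow> 'v) \<Rightarrow> 'v set \<Rightarrow> (nat \<Rightarrow> 'v \<Rightarrow> 'v) \<Rightarrow> real \<Rightarrow> bool" where
  "of_type lm rm D Ts \<omega> \<longleftrightarrow>
     in_KC lm rm D Ts \<and>
     S_spectrum lm D Ts \<subseteq> closure (sector \<omega>) \<and>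
     (\<forall>\<theta>. \<omega> < \<theta> \<and> \<theta> < pi \<longrightarrow> (\<exists>C\<ge>0. \<forall>s \<in> (UNIV - sector \<theta>) - {0}.
        op_norm_le (SL_inv lm D Ts s) (C / norm s) \<and> op_norm_le (SR_inv lm D Ts s) (C / norm s)))"

end

theory Submission
  imports Defs
begin

(* Adding S_L^{-1}(s,T) = (s - conj T) Q_{c,s}^{-1} and S_L^{-1}(s, conj T) = (s - T) Q_{c,s}^{-1}
   (T and its conjugate have the same Q_{c,s} on the same domain) gives 2 (s - T_0) Q_{c,s}^{-1}.
   So the type-omega bounds for T and conj T give |(s - T_0) y| <= K/|s| |Q_{c,s}(T) y| for
   y in dom(T^2) and s outside the sector S_theta.  The complement of S_theta is a cone, so the
   same holds at mu = (1 + delta) s, and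
     Q_{c,mu}(T) y - Q_{c,s}(T) y = delta s ((mu - T_0) y + (s - T_0) y),
     (mu - T_0) y - (s - T_0) y = delta s y.
   For delta = 1/(2K+1) the first identity lets the bound at mu be absorbed into the one at s,
   and the second then yields delta |s|^2 |y| <= 4 K |Q_{c,s}(T) y|. *)

lemma mkq_nth [simp]:
  "mkq a b c d $ 0 = a" "mkq a b c d $ 1 = b" "mkq a b c d $ 2 = c" "mkq a b c d $ 3 = d"
  by (simp_all add: mkq_def)

lemma qmult_nth [simp]:
  "qmult a b $ 0 = a$0*b$0 - a$1*b$1 - a$2*b$2 - a$3*b$3"
  "qmult a b $ 1 = a$0*b$1 + a$1*b$0 + a$2*b$3 - a$3*b$2"
  "qmult a b $ 2 = a$0*b$2 - a$1*b$3 + a$2*b$0 + a$3*b$1"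
  "qmult a b $ 3 = a$0*b$3 + a$1*b$2 - a$2*b$1 + a$3*b$0"
  by (simp_all add: qmult_def)

lemma qreal_nth [simp]: "qreal r $ 0 = r" "qreal r $ 1 = 0" "qreal r $ 2 = 0" "qreal r $ 3 = 0"
  by (simp_all add: qreal_def)

lemma numeral_4_eq_0: "(4::4) = 0"
  by simp

lemma quat_eqI:
  fixes x y :: quat
  assumes "x$0 = y$0" "x$1 = y$1" "x$2 = y$2" "x$3 = y$3"
  shows "x = y"
  using assms unfolding vec_eq_iff forall_4 numeral_4_eq_0 by simp

lemma norm_quat: "norm (x::quat) = sqrt ((x$0)^2 + (x$1)^2 + (x$2)^2 + (x$3)^2)"
  unfolding norm_vec_def L2_set_def sum_4 numeral_4_eq_0 by (simp add: ac_simps)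

lemma qmult_qreal_left [simp]: "qmult (qreal r) a = r *\<^sub>R a"
  by (rule quat_eqI) simp_all

lemma qmult_qreal_right [simp]: "qmult a (qreal r) = r *\<^sub>R a"
  by (rule quat_eqI) simp_all

lemma qmult_scaleR_left: "qmult (c *\<^sub>R a) b = c *\<^sub>R qmult a b"
  by (rule quat_eqI) (simp_all add: algebra_simps)

lemma scaleR_qreal: "c *\<^sub>R qreal r = qreal (c * r)"
  by (rule quat_eqI) simp_all

lemma qe_0: "qe 0 = qreal 1"
  by (simp add: qe_def qreal_def)

lemma qmult_qcnj_self: "qmult (qcnj s) s = qreal ((norm s)^2)"
  unfolding norm_quat by (rule quat_eqI) (simp_all add: qcnj_def power2_eq_square algebra_simps)

lemma norm_qcnj [simp]: "norm (qcnj s) = norm s"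
  unfolding norm_quat by (simp add: qcnj_def)

lemma sector_eq:
  "sector \<theta> = {r *\<^sub>R (qreal (cos \<phi>) + sin \<phi> *\<^sub>R J) | r \<phi> J.
     r > 0 \<and> J \<in> imag_sphere \<and> \<bar>\<phi>\<bar> < \<theta>}"
  unfolding sector_def qmult_qreal_left qmult_qreal_right ..

lemma polar_nth_0:
  assumes "J \<in> imag_sphere"
  shows "(r *\<^sub>R (qreal (cos \<phi>) + sin \<phi> *\<^sub>R J))$0 = r * cos \<phi>"
  using assms by (simp add: imag_sphere_def)

lemma norm_polar:
  assumes "J \<in> imag_sphere" "r \<ge> 0"
  shows "norm (r *\<^sub>R (qreal (cos \<phi>) + sin \<phi> *\<^sub>R J)) = r"
proof -
  have J0: "J$0 = 0" and J: "(J$1)^2 + (J$2)^2 + (J$3)^2 = 1"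
    using assms unfolding imag_sphere_def norm_quat by auto
  from J0 have "(cos \<phi> + sin \<phi> * J$0)^2 + (sin \<phi> * J$1)^2 + (sin \<phi> * J$2)^2 + (sin \<phi> * J$3)^2
      = (cos \<phi>)^2 + (sin \<phi>)^2 * ((J$1)^2 + (J$2)^2 + (J$3)^2)"
    by (simp add: power_mult_distrib algebra_simps)
  then have "norm (qreal (cos \<phi>) + sin \<phi> *\<^sub>R J) = 1"
    unfolding norm_quat J by simp
  then show ?thesis
    using assms(2) by simp
qed

lemma quat_polar:
  fixes x :: quat
  assumes "x \<noteq> 0"
  obtains J \<phi> where "J \<in> imag_sphere" "0 \<le> \<phi>" "\<phi> \<le> pi"
    and "x = norm x *\<^sub>R (qreal (cos \<phi>) + sin \<phi> *\<^sub>R J)"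
proof -
  define r where "r = norm x"
  define a where "a = x$0"
  define v where "v = x - qreal a"
  define m where "m = norm v"
  define J where "J = (if m = 0 then qe 1 else (1 / m) *\<^sub>R v)"
  have r: "r > 0" using assms by (simp add: r_def)
  have m0: "m \<ge> 0" by (simp add: m_def)
  have "m *\<^sub>R J = v"
    by (cases "m = 0") (simp_all add: J_def m_def)
  then have decomp: "qreal a + m *\<^sub>R J = x"
    by (simp add: v_def)
  have "J$0 = 0"
    by (simp add: J_def qe_def v_def a_def)
  moreover have "norm J = 1"
    by (cases "m = 0") (simp add: J_def qe_def norm_quat, simp add: J_def m_def[symmetric] m0)
  ultimately have "J \<in> imag_sphere"
    by (simp add: imag_sphere_def)
  have m2: "m^2 = r^2 - a^2"
    unfolding r_def m_def v_def a_def norm_quat by simp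
  have "\<bar>a\<bar> \<le> r"
    unfolding a_def r_def by (rule component_le_norm_cart)
  then have c: "-1 \<le> a / r" "a / r \<le> 1"
    using r by (simp_all add: abs_le_iff divide_simps)
  have "sin (arccos (a / r)) = sqrt (1 - (a / r)^2)"
    using c by (simp add: sin_arccos)
  also have "1 - (a / r)^2 = (m / r)^2"
    using r m2 by (simp add: field_simps power_divide)
  finally have "sin (arccos (a / r)) = m / r"
    using r m0 by simp
  moreover have "cos (arccos (a / r)) = a / r"
    using c by simp
  ultimately have "r *\<^sub>R (qreal (cos (arccos (a / r))) + sin (arccos (a / r)) *\<^sub>R J)
      = qreal a + m *\<^sub>R J"
    using r by (simp add: scaleR_qreal scaleR_add_right)
  moreover have "0 \<le> arccos (a / r)" "arccos (a / r) \<le> pi"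
    using c by (simp_all add: arccos_lbound arccos_ubound)
  ultimately show ?thesis
    using that decomp \<open>J \<in> imag_sphere\<close> unfolding r_def by metis
qed

lemma mem_sector_iff:
  assumes "0 \<le> \<theta>" "\<theta> \<le> pi"
  shows "x \<in> sector \<theta> \<longleftrightarrow> x \<noteq> 0 \<and> norm x * cos \<theta> < x$0"
proof
  assume "x \<in> sector \<theta>"
  then obtain r \<phi> J where x: "x = r *\<^sub>R (qreal (cos \<phi>) + sin \<phi> *\<^sub>R J)"
    and r: "r > 0" and J: "J \<in> imag_sphere" and "\<bar>\<phi>\<bar> < \<theta>"
    unfolding sector_eq by blast
  then have "cos \<theta> < cos \<bar>\<phi>\<bar>"
    using assms by (subst cos_mono_less_eq) auto
  then have "cos \<theta> < cos \<phi>"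
    by simp
  moreover have "norm x = r"
    unfolding x using J r by (intro norm_polar) auto
  moreover have "x$0 = r * cos \<phi>"
    unfolding x using J by (rule polar_nth_0)
  ultimately show "x \<noteq> 0 \<and> norm x * cos \<theta> < x$0"
    using r by auto
next
  assume x: "x \<noteq> 0 \<and> norm x * cos \<theta> < x$0"
  then obtain J \<phi> where J: "J \<in> imag_sphere" and \<phi>: "0 \<le> \<phi>" "\<phi> \<le> pi"
    and x_eq: "x = norm x *\<^sub>R (qreal (cos \<phi>) + sin \<phi> *\<^sub>R J)"
    using quat_polar by blast
  have "x$0 = norm x * cos \<phi>"
    using polar_nth_0[OF J] x_eq by metis
  with x have "cos \<theta> < cos \<phi>"
    by (metis mult_less_cancel_left_pos zero_less_norm_iff)
  then have "\<bar>\<phi>\<bar> < \<theta>"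
    using assms \<phi> by (subst (asm) cos_mono_less_eq) auto
  moreover have "norm x > 0"
    using x by simp
  ultimately show "x \<in> sector \<theta>"
    using x_eq J unfolding sector_eq by blast
qed

lemma closure_sector_subset:
  assumes "0 \<le> \<omega>" "\<omega> \<le> pi"
  shows "closure (sector \<omega>) \<subseteq> {x. norm x * cos \<omega> \<le> x$0}"
proof (rule closure_minimal)
  show "sector \<omega> \<subseteq> {x. norm x * cos \<omega> \<le> x$0}"
    using mem_sector_iff[OF assms] by (auto intro: less_imp_le)
  show "closed {x::quat. norm x * cos \<omega> \<le> x$0}"
    by (intro closed_Collect_le continuous_intros)
qed

lemma notin_closure_sector:
  assumes "0 \<le> \<omega>" "\<omega> < \<theta>" "\<theta> \<le> pi" "s \<notin> sector \<theta>" "s \<noteq> 0"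
  shows "s \<notin> closure (sector \<omega>)"
proof -
  have "s$0 \<le> norm s * cos \<theta>"
    using assms mem_sector_iff[of \<theta> s] by auto
  also have "\<dots> < norm s * cos \<omega>"
    using assms by (subst mult_less_cancel_left_pos) (auto simp: cos_mono_less_eq)
  finally show ?thesis
    using closure_sector_subset[of \<omega>] assms by force
qed

lemma scaleR_notin_sector:
  assumes "0 \<le> \<theta>" "\<theta> \<le> pi" "s \<notin> sector \<theta>" "c > 0"
  shows "c *\<^sub>R s \<notin> sector \<theta>"
  using assms by (auto simp: mem_sector_iff mult.assoc)

lemma Qcs_inv_Qcs:
  assumes "s \<in> S_resolvent_set lm D Ts" "z \<in> dom_sq lm D Ts"
  shows "Qcs_inv lm D Ts s (Qcs lm Ts s z) = z"
  using assms unfolding S_resolvent_set_def Qcs_inv_def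
  by (simp add: bij_betw_imp_inj_on the_inv_into_f_f)

lemma Qcs_inv_mem_dom_sq:
  assumes "s \<in> S_resolvent_set lm D Ts"
  shows "Qcs_inv lm D Ts s v \<in> dom_sq lm D Ts"
  using assms unfolding S_resolvent_set_def Qcs_inv_def
  by (blast intro: bij_betw_apply bij_betw_the_inv_into)

lemma Qcs_Qcs_inv:
  assumes "s \<in> S_resolvent_set lm D Ts"
  shows "Qcs lm Ts s (Qcs_inv lm D Ts s v) = v"
  using assms unfolding S_resolvent_set_def Qcs_inv_def
  by (simp add: f_the_inv_into_f_bij_betw)

lemma mem_S_resolvent_set_outside_sector:
  assumes "S_spectrum lm D Ts \<subseteq> closure (sector \<omega>)"
    and "0 \<le> \<omega>" "\<omega> < \<theta>" "\<theta> \<le> pi" "s \<notin> sector \<theta>" "s \<noteq> 0"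
  shows "s \<in> S_resolvent_set lm D Ts"
  using assms notin_closure_sector[of \<omega> \<theta> s] unfolding S_spectrum_def by blast

locale qbanach =
  fixes lm :: "quat \<Rightarrow> 'v::banach \<Rightarrow> 'v" and rm :: "'v \<Rightarrow> quat \<Rightarrow> 'v"
  assumes two_sided_qbanach: "two_sided_qbanach lm rm"
begin

lemma lm_add: "lm a (v + w) = lm a v + lm a w"
  using two_sided_qbanach unfolding two_sided_qbanach_def by simp

lemma lm_qmult: "lm (qmult a b) v = lm a (lm b v)"
  using two_sided_qbanach unfolding two_sided_qbanach_def by simp

lemma lm_qreal: "lm (qreal r) v = r *\<^sub>R v"
  using two_sided_qbanach unfolding two_sided_qbanach_def by simp

lemma norm_lm_le: "norm (lm a v) \<le> norm a * norm v"
  using two_sided_qbanach unfolding two_sided_qbanach_def by simp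

lemma lm_scaleR_left: "lm (r *\<^sub>R a) v = r *\<^sub>R lm a v"
  using lm_qmult[of "qreal r" a v] by (simp add: lm_qreal)

lemma linear_lm: "linear (lm a)"
proof (rule linearI)
  show "lm a (r *\<^sub>R v) = r *\<^sub>R lm a v" for r v
    using lm_qmult[of a "qreal r" v] lm_qmult[of "qreal r" a v] by (simp add: lm_qreal)
qed (rule lm_add)

lemma norm_lm_ge:
  assumes "s \<noteq> 0"
  shows "norm s * norm v \<le> norm (lm s v)"
proof -
  define s' where "s' = (1 / (norm s)^2) *\<^sub>R qcnj s"
  have "qmult s' s = qreal 1"
    using assms by (simp add: s'_def qmult_scaleR_left qmult_qcnj_self scaleR_qreal)
  then have "norm v = norm (lm s' (lm s v))"
    by (metis lm_qmult lm_qreal scaleR_one)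
  also have "\<dots> \<le> norm (lm s v) / norm s"
    using norm_lm_le[of s' "lm s v"] assms by (simp add: s'_def power2_eq_square)
  finally show ?thesis
    using assms by (simp add: field_simps)
qed

lemma op_of_add_conj_comps: "op_of lm Ts v + op_of lm (conj_comps Ts) v = 2 *\<^sub>R Ts 0 v"
  by (simp add: op_of_def conj_comps_def eval_nat_numeral linear_neg[OF linear_lm] qe_0 lm_qreal
      scaleR_2)

lemma Qcs_eq: "Qcs lm Ts s v = lm s (lm s v) - 2 *\<^sub>R lm s (Ts 0 v) + (\<Sum>i<4. Ts i (Ts i v))"
  by (simp add: Qcs_def lm_qmult lm_qreal lm_scaleR_left)

lemma Qcs_scaleR_diff:
  "Qcs lm Ts (c *\<^sub>R s) y - Qcs lm Ts s y
     = (c - 1) *\<^sub>R lm s ((lm (c *\<^sub>R s) y - Ts 0 y) + (lm s y - Ts 0 y))"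
  by (simp add: Qcs_eq lm_scaleR_left linear_add[OF linear_lm] linear_diff[OF linear_lm]
      linear_scale[OF linear_lm] algebra_simps)
    (simp add: scaleR_2 algebra_simps flip: scaleR_scaleR)

lemma norm_le_of_real_part_estimate:
  assumes "s \<noteq> 0" "K \<ge> 0"
    and est: "\<And>c. c \<ge> 1 \<Longrightarrow>
      norm (lm (c *\<^sub>R s) y - Ts 0 y) \<le> K / norm (c *\<^sub>R s) * norm (Qcs lm Ts (c *\<^sub>R s) y)"
  shows "norm y \<le> 4 * K * (2 * K + 1) / (norm s)^2 * norm (Qcs lm Ts s y)"
proof -
  define \<kappa> where "\<kappa> = K / norm s"
  define \<delta> where "\<delta> = 1 / (2 * K + 1)"
  define a where "a = lm s y - Ts 0 y"
  define b where "b = lm ((1 + \<delta>) *\<^sub>R s) y - Ts 0 y"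
  define q where "q = norm (Qcs lm Ts s y)"
  define w where "w = norm (Qcs lm Ts ((1 + \<delta>) *\<^sub>R s) y)"
  have S: "norm s > 0" and \<kappa>: "\<kappa> \<ge> 0" and \<delta>: "\<delta> > 0"
    using assms by (auto simp: \<kappa>_def \<delta>_def)
  have "\<kappa> * \<delta> * norm s = K / (2 * K + 1)"
    using S by (simp add: \<kappa>_def \<delta>_def)
  also have "\<dots> \<le> 1 / 2"
    using assms(2) by (simp add: field_simps)
  finally have \<kappa>\<delta>: "\<kappa> * \<delta> * norm s \<le> 1 / 2" .
  have ha: "norm a \<le> \<kappa> * q"
    using est[of 1] by (simp add: \<kappa>_def a_def q_def)
  have "norm b \<le> K / ((1 + \<delta>) * norm s) * w"
    using est[of "1 + \<delta>"] \<delta> by (simp add: b_def w_def)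
  also have "\<dots> \<le> \<kappa> * w"
    unfolding \<kappa>_def using S \<delta> assms(2)
    by (intro mult_right_mono divide_left_mono) (auto simp: w_def)
  finally have hb: "norm b \<le> \<kappa> * w" .
  have "Qcs lm Ts ((1 + \<delta>) *\<^sub>R s) y = Qcs lm Ts s y + \<delta> *\<^sub>R lm s (b + a)"
    using Qcs_scaleR_diff[of Ts "1 + \<delta>" s y] by (simp add: a_def b_def algebra_simps)
  then have "w \<le> q + \<delta> * norm (lm s (b + a))"
    using \<delta> norm_triangle_ineq[of "Qcs lm Ts s y" "\<delta> *\<^sub>R lm s (b + a)"]
    by (simp add: w_def q_def)
  also have "\<dots> \<le> q + \<delta> * (norm s * (norm a + norm b))"
    using \<delta> norm_lm_le[of s "b + a"] norm_triangle_ineq[of b a]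
    by (intro add_left_mono mult_left_mono) (auto elim!: order_trans intro: mult_left_mono)
  finally have hw: "w \<le> q + \<delta> * norm s * (norm a + norm b)"
    by (simp add: mult.assoc)
  have "\<delta> * (norm s * norm y) \<le> \<delta> * norm (lm s y)"
    using \<delta> norm_lm_ge[OF assms(1)] by (simp add: mult_left_mono)
  also have "\<dots> = norm (b - a)"
    using \<delta> by (simp add: a_def b_def lm_scaleR_left) (simp add: algebra_simps)
  also have "\<dots> \<le> norm a + norm b"
    using norm_triangle_ineq4[of b a] by simp
  finally have hy: "\<delta> * (norm s * norm y) \<le> norm a + norm b" .
  have "norm b \<le> \<kappa> * q + (\<kappa> * \<delta> * norm s) * (norm a + norm b)"
    using hb hw \<kappa> by (auto elim!: order_trans dest: mult_left_mono simp: algebra_simps)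
  also have "\<dots> \<le> \<kappa> * q + (norm a + norm b) / 2"
    using mult_right_mono[OF \<kappa>\<delta>, of "norm a + norm b"] by simp
  finally have ab: "norm a + norm b \<le> 4 * (\<kappa> * q)"
    using ha by (simp add: field_simps)
  have "norm s * norm y \<le> 4 * (\<kappa> * q) / \<delta>"
    using hy ab \<delta> by (simp add: pos_le_divide_eq mult.commute)
  then show ?thesis
    using S by (simp add: \<kappa>_def \<delta>_def q_def power2_eq_square field_simps)
qed

lemma conj_comps_conj_comps [simp]: "conj_comps (conj_comps Ts) = Ts"
  by (intro ext) (simp add: conj_comps_def)

lemma two_sided_subspace_uminus:
  assumes "two_sided_subspace lm rm D" "v \<in> D"
  shows "- v \<in> D"
proof -
  have "lm (qreal (-1)) v \<in> D"
    using assms unfolding two_sided_subspace_def by blast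
  then show ?thesis
    by (simp add: lm_qreal)
qed

lemma two_sided_linear_on_uminus:
  assumes "two_sided_linear_on lm rm D A" "v \<in> D"
  shows "A (- v) = - A v"
proof -
  have "A (lm (qreal (-1)) v) = lm (qreal (-1)) (A v)"
    using assms unfolding two_sided_linear_on_def by blast
  then show ?thesis
    by (simp add: lm_qreal)
qed

lemma dom_sq_eq:
  assumes "in_KC lm rm D Ts"
  shows "dom_sq lm D Ts = {v \<in> D. \<forall>j<4. Ts j v \<in> D}"
proof
  show "dom_sq lm D Ts \<subseteq> {v \<in> D. \<forall>j<4. Ts j v \<in> D}"
    using assms by (auto simp: in_KC_def dom_sq_def)
  have "op_of lm Ts v \<in> D" if "\<forall>j<4. Ts j v \<in> D" for v
    using assms that unfolding in_KC_def two_sided_subspace_def op_of_def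
    by (simp add: eval_nat_numeral)
  then show "{v \<in> D. \<forall>j<4. Ts j v \<in> D} \<subseteq> dom_sq lm D Ts"
    by (auto simp: dom_sq_def)
qed

lemma dom_sq_conj_comps:
  assumes "in_KC lm rm D Ts" "in_KC lm rm D (conj_comps Ts)"
  shows "dom_sq lm D (conj_comps Ts) = dom_sq lm D Ts"
proof -
  have "two_sided_subspace lm rm D"
    using assms(1) by (simp add: in_KC_def)
  then have "conj_comps Ts j v \<in> D \<longleftrightarrow> Ts j v \<in> D" for j v
    unfolding conj_comps_def using two_sided_subspace_uminus by force
  then show ?thesis
    unfolding dom_sq_eq[OF assms(1)] dom_sq_eq[OF assms(2)] by blast
qed

lemma Qcs_conj_comps:
  assumes "in_KC lm rm D Ts" "z \<in> dom_sq lm D Ts"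
  shows "Qcs lm (conj_comps Ts) s z = Qcs lm Ts s z"
proof -
  have "conj_comps Ts i (conj_comps Ts i z) = Ts i (Ts i z)" if "i < 4" for i
  proof -
    have "Ts i z \<in> D"
      using assms(2) that unfolding dom_sq_eq[OF assms(1)] by blast
    moreover have "two_sided_linear_on lm rm D (Ts i)"
      using assms(1) that by (simp add: in_KC_def)
    ultimately show ?thesis
      by (simp add: conj_comps_def two_sided_linear_on_uminus)
  qed
  then show ?thesis
    by (simp add: Qcs_def conj_comps_def)
qed

lemma SL_inv_add_conj_comps:
  assumes "in_KC lm rm D Ts" "in_KC lm rm D (conj_comps Ts)"
    and "s \<in> S_resolvent_set lm D Ts" "s \<in> S_resolvent_set lm D (conj_comps Ts)"
    and "z \<in> dom_sq lm D Ts"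
  shows "SL_inv lm D Ts s (Qcs lm Ts s z) + SL_inv lm D (conj_comps Ts) s (Qcs lm Ts s z)
    = 2 *\<^sub>R (lm s z - Ts 0 z)"
proof -
  have "z \<in> dom_sq lm D (conj_comps Ts)"
    using assms(5) by (simp add: dom_sq_conj_comps[OF assms(1,2)])
  from Qcs_inv_Qcs[OF assms(4) this]
  have "Qcs_inv lm D (conj_comps Ts) s (Qcs lm Ts s z) = z"
    by (simp add: Qcs_conj_comps[OF assms(1,5)])
  moreover have "Qcs_inv lm D Ts s (Qcs lm Ts s z) = z"
    using assms(3,5) by (rule Qcs_inv_Qcs)
  ultimately have "SL_inv lm D Ts s (Qcs lm Ts s z) + SL_inv lm D (conj_comps Ts) s (Qcs lm Ts s z)
      = 2 *\<^sub>R lm s z - (op_of lm Ts z + op_of lm (conj_comps Ts) z)"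
    by (simp add: SL_inv_def scaleR_2)
  also have "\<dots> = 2 *\<^sub>R (lm s z - Ts 0 z)"
    by (simp add: op_of_add_conj_comps scaleR_diff_right)
  finally show ?thesis .
qed

lemma of_type_real_part_estimate:
  assumes "of_type lm rm D Ts \<omega>" "of_type lm rm D (conj_comps Ts) \<omega>"
    and "0 \<le> \<omega>" "\<omega> < \<theta>" "\<theta> < pi"
  obtains K where "K \<ge> 0"
    and "\<And>s z. s \<notin> sector \<theta> \<Longrightarrow> s \<noteq> 0 \<Longrightarrow> z \<in> dom_sq lm D Ts \<Longrightarrow>
      norm (lm s z - Ts 0 z) \<le> K / norm s * norm (Qcs lm Ts s z)"
proof -
  have KC: "in_KC lm rm D Ts" "in_KC lm rm D (conj_comps Ts)"
    and spec: "S_spectrum lm D Ts \<subseteq> closure (sector \<omega>)"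
      "S_spectrum lm D (conj_comps Ts) \<subseteq> closure (sector \<omega>)"
    using assms(1,2) by (simp_all add: of_type_def)
  have "\<exists>C\<ge>0. \<forall>s \<in> (UNIV - sector \<theta>) - {0}. op_norm_le (SL_inv lm D Ts s) (C / norm s)"
    using assms(1,4,5) unfolding of_type_def by blast
  then obtain C1 where "C1 \<ge> 0" and C1: "\<And>s. s \<notin> sector \<theta> \<Longrightarrow> s \<noteq> 0 \<Longrightarrow>
      op_norm_le (SL_inv lm D Ts s) (C1 / norm s)"
    by blast
  have "\<exists>C\<ge>0. \<forall>s \<in> (UNIV - sector \<theta>) - {0}.
      op_norm_le (SL_inv lm D (conj_comps Ts) s) (C / norm s)"
    using assms(2,4,5) unfolding of_type_def by blast
  then obtain C2 where "C2 \<ge> 0" and C2: "\<And>s. s \<notin> sector \<theta> \<Longrightarrow> s \<noteq> 0 \<Longrightarrow>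
      op_norm_le (SL_inv lm D (conj_comps Ts) s) (C2 / norm s)"
    by blast
  have "norm (lm s z - Ts 0 z) \<le> (C1 + C2) / 2 / norm s * norm (Qcs lm Ts s z)"
    if s: "s \<notin> sector \<theta>" "s \<noteq> 0" and z: "z \<in> dom_sq lm D Ts" for s z
  proof -
    let ?v = "Qcs lm Ts s z"
    have "s \<in> S_resolvent_set lm D Ts" "s \<in> S_resolvent_set lm D (conj_comps Ts)"
      using mem_S_resolvent_set_outside_sector[OF spec(1) assms(3,4) _ s]
        mem_S_resolvent_set_outside_sector[OF spec(2) assms(3,4) _ s] assms(5)
      by simp_all
    then have "2 * norm (lm s z - Ts 0 z)
        = norm (SL_inv lm D Ts s ?v + SL_inv lm D (conj_comps Ts) s ?v)"
      by (simp add: SL_inv_add_conj_comps[OF KC _ _ z])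
    also have "\<dots> \<le> C1 / norm s * norm ?v + C2 / norm s * norm ?v"
      using C1[OF s] C2[OF s] unfolding op_norm_le_def by (intro norm_triangle_le add_mono) auto
    finally show ?thesis
      using s(2) by (simp add: field_simps)
  qed
  with \<open>C1 \<ge> 0\<close> \<open>C2 \<ge> 0\<close> show ?thesis
    by (intro that[of "(C1 + C2) / 2"]) auto
qed

lemma of_type_norm_Qcs_inv_le:
  assumes "of_type lm rm D Ts \<omega>" "of_type lm rm D (conj_comps Ts) \<omega>"
    and "0 \<le> \<omega>" "\<omega> < \<theta>" "\<theta> < pi"
  shows "\<exists>C\<ge>0. \<forall>s \<in> (UNIV - sector \<theta>) - {0}. op_norm_le (Qcs_inv lm D Ts s) (C / norm s ^ 2)"
proof -
  obtain K where "K \<ge> 0" and K: "\<And>s z. s \<notin> sector \<theta> \<Longrightarrow> s \<noteq> 0 \<Longrightarrow> z \<in> dom_sq lm D Ts \<Longrightarrow>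
      norm (lm s z - Ts 0 z) \<le> K / norm s * norm (Qcs lm Ts s z)"
    using of_type_real_part_estimate[OF assms] by blast
  have "norm (Qcs_inv lm D Ts s v) \<le> 4 * K * (2 * K + 1) / norm s ^ 2 * norm v"
    if s: "s \<notin> sector \<theta>" "s \<noteq> 0" for s v
  proof -
    define y where "y = Qcs_inv lm D Ts s v"
    have "S_spectrum lm D Ts \<subseteq> closure (sector \<omega>)"
      using assms(1) by (simp add: of_type_def)
    then have res: "s \<in> S_resolvent_set lm D Ts"
      using assms(3-5) s by (intro mem_S_resolvent_set_outside_sector) auto
    have "norm y \<le> 4 * K * (2 * K + 1) / norm s ^ 2 * norm (Qcs lm Ts s y)"
    proof (rule norm_le_of_real_part_estimate[OF s(2) \<open>K \<ge> 0\<close>])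
      fix c :: real
      assume "c \<ge> 1"
      then have "c *\<^sub>R s \<notin> sector \<theta>" "c *\<^sub>R s \<noteq> 0"
        using scaleR_notin_sector[of \<theta> s c] assms(3-5) s by auto
      moreover have "y \<in> dom_sq lm D Ts"
        unfolding y_def using res by (rule Qcs_inv_mem_dom_sq)
      ultimately show "norm (lm (c *\<^sub>R s) y - Ts 0 y)
          \<le> K / norm (c *\<^sub>R s) * norm (Qcs lm Ts (c *\<^sub>R s) y)"
        by (rule K)
    qed
    then show ?thesis
      unfolding y_def Qcs_Qcs_inv[OF res] .
  qed
  with \<open>K \<ge> 0\<close> show ?thesis
    unfolding op_norm_le_def by (intro exI[of _ "4 * K * (2 * K + 1)"]) auto
qed

end

theorem lemma2p7:
  fixes lm :: "quat \<Rightarrow> 'v::banach \<Rightarrow> 'v" and rm :: "'v \<Rightarrow> quat \<Rightarrow> 'v"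
    and D :: "'v set" and Ts :: "nat \<Rightarrow> 'v \<Rightarrow> 'v" and \<omega> :: real
  assumes "two_sided_qbanach lm rm"
    and "0 < \<omega>" and "\<omega> < pi"
    and "in_KC lm rm D Ts"
    and "of_type lm rm D Ts \<omega>"
    and "of_type lm rm D (conj_comps Ts) \<omega>"
  shows "\<forall>\<theta>. \<omega> < \<theta> \<and> \<theta> < pi \<longrightarrow> (\<exists>C\<ge>0. \<forall>s \<in> (UNIV - sector \<theta>) - {0}.
           op_norm_le (Qcs_inv lm D Ts s) (C / norm s ^ 2))"
  \<comment> \<open>\<open>in_KC lm rm D Ts\<close> is part of \<open>of_type\<close>, and \<open>\<omega> < pi\<close> follows from \<open>\<omega> < \<theta> < pi\<close>.\<close>
  using qbanach.of_type_norm_Qcs_inv_le[OF qbanach.intro[OF assms(1)] assms(5,6)] assms(2)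
  by (simp add: less_imp_le)

end
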